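(* Let $a(z)=\sum_{i\ge0}a_iz^i$ and $b(z)=\sum_{i\ge0}b_iz^i$ be rational series in $\mathbb{R}[[z]]$ satisfying (P1), (P2$_d$) and (P3$_{d+1}$) for a positive integer $d$. If $a(z)/(1-z)\le b(z)/(1-z)$ coefficientwise, then $\lim_{z\to1}a(z)(1-z)^d\le\lim_{z\to1}b(z)(1-z)^d$.
   Context: A rational series is the power series expansion at $z=0$ of a rational function regular at $0$; limits are taken for the rational function. For power series, $\sum c_iz^i\le\sum e_iz^i$ means $c_i\le e_i$ for all $i$. (P1): the rational function has poles only at roots of unity. (P2$_m$): $z=1$ is a pole of order exactly $m$. (P3$_m$): every pole other than $z=1$ has order less than $m$. *)

theory Defs
  imports "HOL-Analysis.Analysis" "HOL-Computational_Algebra.Computational_Algebra"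
begin

text \<open>Order of the pole at z: multiplicity of z as a root of q minus its multiplicity
  as a root of p (truncated at 0); the zero function has no poles.\<close>
definition pole_order :: "real poly \<Rightarrow> real poly \<Rightarrow> complex \<Rightarrow> nat" where
  "pole_order p q z =
     (if p = 0 then 0
      else order z (map_poly complex_of_real q) - order z (map_poly complex_of_real p))"

text \<open>The series with coefficient sequence a is the expansion at 0 of p/q, regular at 0.\<close>
definition rat_series :: "real poly \<Rightarrow> real poly \<Rightarrow> (nat \<Rightarrow> real) \<Rightarrow> bool" where
  "rat_series p q a \<longleftrightarrow> poly q 0 \<noteq> 0 \<and> fps_of_poly q * Abs_fps a = fps_of_poly p"

definition P1 :: "real poly \<Rightarrow> real poly \<Rightarrow> bool" where
  "P1 p q \<longleftrightarrow> (\<forall>z. pole_order p q z > 0 \<longrightarrow> (\<exists>n>0. z ^ n = 1))"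

definition P2 :: "nat \<Rightarrow> real poly \<Rightarrow> real poly \<Rightarrow> bool" where
  "P2 m p q \<longleftrightarrow> pole_order p q 1 = m"

definition P3 :: "nat \<Rightarrow> real poly \<Rightarrow> real poly \<Rightarrow> bool" where
  "P3 m p q \<longleftrightarrow> (\<forall>z. z \<noteq> 1 \<longrightarrow> pole_order p q z < m)"

end

theory Submission
  imports Defs "HOL-Complex_Analysis.Cauchy_Integral_Formula" "HOL-Computational_Algebra.Field_as_Ring"
begin

text \<open>
  Let c(z) = a(z)/(1 - z). It is the expansion of the rational function p/(q (1 - z)), whose
  poles are those of p/q together with z = 1, hence roots of unity by (P1); so c has radius of
  convergence at least 1, and p(x)/q(x) (1 - x)^d = (1 - x)^(d+1) c(x) for x < 1 close to 1.
  Comparing coefficients gives c_a(x) \<le> c_b(x) for 0 \<le> x < 1, and since (P2_d) makes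
  both sides converge as x tends to 1, the inequality passes to the limits.
\<close>

lemma map_poly_of_real_mult:
  "map_poly (of_real :: real \<Rightarrow> 'a::{real_algebra_1,comm_ring_1}) (p * q)
     = map_poly of_real p * map_poly of_real q"
  by (simp add: poly_eq_iff coeff_map_poly coeff_mult)

lemma map_poly_of_real_power:
  "map_poly (of_real :: real \<Rightarrow> 'a::{real_algebra_1,comm_ring_1}) (p ^ n)
     = map_poly of_real p ^ n"
  by (induction n) (simp_all add: map_poly_of_real_mult)

lemma poly_map_poly_of_real:
  "poly (map_poly of_real p) (of_real x :: 'a::{real_algebra_1,comm_ring_1}) = of_real (poly p x)"
  by (induction p) (auto simp: map_poly_pCons)

lemma order_map_poly_of_real:
  fixes p :: "real poly"
  assumes "p \<noteq> 0"
  shows "order (complex_of_real x) (map_poly of_real p) = order x p"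
proof -
  obtain r where r: "p = [:- x, 1:] ^ order x p * r" and "\<not> [:- x, 1:] dvd r"
    using order_decomp[OF assms] by blast
  then have "poly r x \<noteq> 0" by (simp add: poly_eq_0_iff_dvd)
  have "map_poly of_real p = [:- complex_of_real x, 1:] ^ order x p * map_poly of_real r"
    by (subst r) (simp add: map_poly_of_real_mult map_poly_of_real_power map_poly_pCons)
  moreover have "poly (map_poly of_real r) (complex_of_real x) \<noteq> 0"
    using \<open>poly r x \<noteq> 0\<close> by (simp add: poly_map_poly_of_real)
  moreover from this have "map_poly complex_of_real r \<noteq> 0" by auto
  ultimately show ?thesis
    by (simp add: order_mult order_power_n_n order_0I)
qed

lemma pole_order_of_real:
  assumes "p \<noteq> 0" "q \<noteq> 0"
  shows "pole_order p q (of_real x) = order x q - order x p"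
  using assms by (simp add: pole_order_def order_map_poly_of_real)

lemma pole_order_mult_one_minus_x:
  assumes "q \<noteq> 0" "z \<noteq> 1"
  shows "pole_order p (q * [:1, -1:]) z = pole_order p q z"
proof -
  have "poly (map_poly complex_of_real [:1, -1:]) z \<noteq> 0"
    using \<open>z \<noteq> 1\<close> by (simp add: map_poly_pCons)
  then have "order z (map_poly complex_of_real [:1, -1:]) = 0"
    by (rule order_0I)
  moreover have "map_poly complex_of_real q \<noteq> 0" "map_poly complex_of_real [:1, -1:] \<noteq> 0"
    using \<open>q \<noteq> 0\<close> by (simp_all add: map_poly_eq_0_iff map_poly_pCons)
  ultimately have "order z (map_poly complex_of_real (q * [:1, -1:]))
                     = order z (map_poly complex_of_real q)"
    unfolding map_poly_of_real_mult by (subst order_mult) auto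
  then show ?thesis
    by (simp only: pole_order_def)
qed

lemma P1_pole_norm_eq_1:
  assumes "P1 p q" "pole_order p q z > 0"
  shows "norm z = 1"
proof -
  obtain n where "n > 0" "z ^ n = 1"
    using assms unfolding P1_def by blast
  then have "norm z ^ n = 1" by (metis norm_one norm_power)
  with \<open>n > 0\<close> show ?thesis
    using power_eq_1_iff[of "norm z" n] by simp
qed

lemma eventually_poly_nonzero_at:
  fixes q :: "'a::real_normed_field poly"
  assumes "q \<noteq> 0"
  shows "eventually (\<lambda>x. poly q x \<noteq> 0) (at c)"
proof -
  have "finite {x. poly q x = 0}"
    using assms by (rule poly_roots_finite)
  then have "\<not> c islimpt {x. poly q x = 0}"
    by (rule islimpt_finite)
  then show ?thesis
    by (simp add: islimpt_iff_eventually)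
qed

lemma tendsto_poly_divide_mult_power:
  fixes p q :: "'a::real_normed_field poly"
  assumes "p \<noteq> 0" "q \<noteq> 0" "order c q \<le> order c p + d"
  shows "\<exists>L. ((\<lambda>x. poly p x / poly q x * (c - x) ^ d) \<longlongrightarrow> L) (at c)"
proof -
  obtain p1 where p1: "p = [:- c, 1:] ^ order c p * p1"
    using order_decomp[OF \<open>p \<noteq> 0\<close>] by blast
  obtain q1 where q1: "q = [:- c, 1:] ^ order c q * q1" and "\<not> [:- c, 1:] dvd q1"
    using order_decomp[OF \<open>q \<noteq> 0\<close>] by blast
  then have "poly q1 c \<noteq> 0" by (simp add: poly_eq_0_iff_dvd)
  define k where "k = order c p + d - order c q"
  have "((\<lambda>x. (- 1) ^ d * (x - c) ^ k * poly p1 x / poly q1 x)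
          \<longlongrightarrow> (- 1) ^ d * (c - c) ^ k * poly p1 c / poly q1 c) (at c)"
    using \<open>poly q1 c \<noteq> 0\<close> by (intro tendsto_intros)
  moreover have "eventually (\<lambda>x. (- 1) ^ d * (x - c) ^ k * poly p1 x / poly q1 x
                        = poly p x / poly q x * (c - x) ^ d) (at c)"
    using eventually_poly_nonzero_at[OF \<open>q \<noteq> 0\<close>] eventually_neq_at_within[of c c UNIV]
  proof eventually_elim
    case (elim x)
    then have "poly q1 x \<noteq> 0" "x - c \<noteq> 0"
      by (subst (asm) q1, simp_all)
    have "(x - c) ^ order c p * (x - c) ^ d = (x - c) ^ order c q * (x - c) ^ k"
      using assms(3) by (simp add: k_def flip: power_add)
    moreover have "(c - x) ^ d = (- 1) ^ d * (x - c) ^ d"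
      by (metis minus_diff_eq power_minus)
    ultimately have "poly p x / poly q x * (c - x) ^ d
        = (- 1) ^ d * ((x - c) ^ order c q * (x - c) ^ k) * poly p1 x
            / ((x - c) ^ order c q * poly q1 x)"
      by (subst p1, subst q1) (simp add: poly_mult poly_power mult_ac)
    also have "\<dots> = (- 1) ^ d * (x - c) ^ k * poly p1 x / poly q1 x"
      using \<open>x - c \<noteq> 0\<close> by (simp add: mult_ac)
    finally show ?case by (rule sym)
  qed
  ultimately show ?thesis
    by (blast intro: Lim_transform_eventually)
qed

lemma fps_conv_radius_rational_ge:
  fixes p q :: "complex poly" and A :: "complex fps" and R :: real
  assumes eq: "fps_of_poly q * A = fps_of_poly p" and "p \<noteq> 0" "q \<noteq> 0" "R > 0"
    and poles: "\<And>z. order z p < order z q \<Longrightarrow> R \<le> norm z"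
  shows "ereal R \<le> fps_conv_radius A"
proof -
  txt \<open>After cancelling gcd p q, every root of the denominator is a pole.\<close>
  define g where "g = gcd p q"
  define p' q' where "p' = p div g" and "q' = q div g"
  have "g \<noteq> 0" "p = g * p'" "q = g * q'"
    using \<open>p \<noteq> 0\<close> by (simp_all add: g_def p'_def q'_def)
  then have "p' \<noteq> 0" "q' \<noteq> 0"
    using \<open>p \<noteq> 0\<close> \<open>q \<noteq> 0\<close> by auto
  have "coprime p' q'"
    unfolding p'_def q'_def g_def using \<open>p \<noteq> 0\<close> by (intro div_gcd_coprime) auto
  have "fps_of_poly g * (fps_of_poly q' * A) = fps_of_poly g * fps_of_poly p'"
    using eq by (simp add: \<open>p = g * p'\<close> \<open>q = g * q'\<close> fps_of_poly_mult mult.assoc)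
  then have eq': "fps_of_poly q' * A = fps_of_poly p'"
    using \<open>g \<noteq> 0\<close> by simp
  have "poly q' z \<noteq> 0" if "z \<in> eball 0 R" for z
  proof
    assume "poly q' z = 0"
    have "\<not> [:- z, 1:] dvd p'"
    proof
      assume "[:- z, 1:] dvd p'"
      moreover have "[:- z, 1:] dvd q'"
        using \<open>poly q' z = 0\<close> by (simp add: poly_eq_0_iff_dvd)
      ultimately have "is_unit [:- z, 1:]"
        using \<open>coprime p' q'\<close> coprime_common_divisor by blast
      then show False by (simp add: is_unit_poly_iff)
    qed
    then have "order z p' = 0"
      by (simp add: order_0I poly_eq_0_iff_dvd)
    moreover have "order z q' > 0"
      using \<open>poly q' z = 0\<close> \<open>q' \<noteq> 0\<close> order_root by blast
    ultimately have "order z p < order z q"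
      using \<open>g \<noteq> 0\<close> \<open>p' \<noteq> 0\<close> \<open>q' \<noteq> 0\<close>
      by (simp add: \<open>p = g * p'\<close> \<open>q = g * q'\<close> order_mult)
    with poles have "R \<le> norm z" .
    with that show False by simp
  qed
  then have "Min {ereal R, fps_conv_radius (fps_of_poly p'), fps_conv_radius (fps_of_poly q')}
               \<le> fps_conv_radius (fps_of_poly p' / fps_of_poly q')"
    using \<open>R > 0\<close> by (intro fps_conv_radius_divide') auto
  moreover have "fps_of_poly p' / fps_of_poly q' = A"
    using \<open>q' \<noteq> 0\<close> by (simp flip: eq')
  ultimately show ?thesis by simp
qed

lemma fps_conv_radius_of_real:
  "fps_conv_radius (Abs_fps (\<lambda>n. complex_of_real (a n))) = fps_conv_radius (Abs_fps a)"
  using conv_radius_norm[of "\<lambda>n. complex_of_real (a n)"] conv_radius_norm[of a]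
  by (simp add: fps_conv_radius_def)

lemma fps_of_poly_mult_map_of_real:
  assumes "fps_of_poly q * Abs_fps a = fps_of_poly p"
  shows "fps_of_poly (map_poly of_real q) * Abs_fps (\<lambda>n. of_real (a n))
           = fps_of_poly (map_poly (of_real :: real \<Rightarrow> 'a::{real_algebra_1,comm_ring_1}) p)"
proof (rule fps_ext)
  fix n
  have "coeff p n = (\<Sum>i=0..n. coeff q i * a (n - i))"
    using arg_cong[OF assms, of "\<lambda>f. f $ n"] by (simp add: fps_mult_nth)
  then show "(fps_of_poly (map_poly of_real q) * Abs_fps (\<lambda>n. of_real (a n))) $ n
               = fps_of_poly (map_poly (of_real :: real \<Rightarrow> 'a) p) $ n"
    by (simp add: fps_mult_nth coeff_map_poly)
qed

lemma rat_series_denom_nonzero: "rat_series p q a \<Longrightarrow> q \<noteq> 0"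
  by (auto simp: rat_series_def)

lemma rat_series_conv_radius_ge_1:
  assumes "rat_series p q a" and poles: "\<And>z. 0 < pole_order p q z \<Longrightarrow> 1 \<le> norm z"
  shows "1 \<le> fps_conv_radius (Abs_fps a)"
proof (cases "p = 0")
  case True
  have "fps_of_poly q * Abs_fps a = 0" "fps_of_poly q \<noteq> 0"
    using assms(1) True by (auto simp: rat_series_def)
  then show ?thesis by simp
next
  case False
  let ?pC = "map_poly complex_of_real p" and ?qC = "map_poly complex_of_real q"
    and ?aC = "Abs_fps (\<lambda>n. complex_of_real (a n))"
  have "fps_of_poly ?qC * ?aC = fps_of_poly ?pC"
    using assms(1) by (intro fps_of_poly_mult_map_of_real) (simp add: rat_series_def)
  moreover have "?pC \<noteq> 0" "?qC \<noteq> 0"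
    using False rat_series_denom_nonzero[OF assms(1)] by (simp_all add: map_poly_eq_0_iff)
  moreover have "1 \<le> norm z" if "order z ?pC < order z ?qC" for z
    using poles that False by (simp add: pole_order_def)
  ultimately have "ereal 1 \<le> fps_conv_radius ?aC"
    by (intro fps_conv_radius_rational_ge[of ?qC ?aC ?pC]) auto
  then show ?thesis
    by (simp add: fps_conv_radius_of_real one_ereal_def)
qed

lemma rat_series_divide_one_minus_X:
  assumes "rat_series p q a"
  shows "rat_series p (q * [:1, -1:]) (($) (Abs_fps a / (1 - fps_X)))"
proof -
  have "is_unit (1 - fps_X :: real fps)"
    by (simp add: fps_is_unit_iff)
  moreover have "fps_of_poly (q * [:1, -1:]) = fps_of_poly q * (1 - fps_X)"
    by (simp only: fps_of_poly_mult) (simp add: fps_of_poly_pCons fps_const_neg)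
  ultimately have
    "fps_of_poly (q * [:1, -1:]) * (Abs_fps a / (1 - fps_X)) = fps_of_poly q * Abs_fps a"
    by (metis mult.assoc mult.commute unit_div_mult_self)
  with assms show ?thesis
    by (simp add: rat_series_def fps_nth_inverse)
qed

lemma eval_fps_rat_series:
  assumes "rat_series p q a" "ereal \<bar>x\<bar> < fps_conv_radius (Abs_fps a)" "poly q x \<noteq> 0"
  shows "eval_fps (Abs_fps a) x = poly p x / poly q x"
proof -
  have "poly p x = eval_fps (fps_of_poly q * Abs_fps a) x"
    using assms(1) by (simp add: rat_series_def)
  also have "\<dots> = poly q x * eval_fps (Abs_fps a) x"
    using assms(2) by (subst eval_fps_mult) auto
  finally show ?thesis
    using assms(3) by (simp add: field_simps)
qed

lemma eval_fps_mono:
  fixes f g :: "real fps"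
  assumes "\<And>n. f $ n \<le> g $ n" "0 \<le> x"
    and "ereal x < fps_conv_radius f" "ereal x < fps_conv_radius g"
  shows "eval_fps f x \<le> eval_fps g x"
  unfolding eval_fps_def
proof (rule suminf_le)
  show "f $ n * x ^ n \<le> g $ n * x ^ n" for n
    using assms(1,2) by (intro mult_right_mono) auto
  show "summable (\<lambda>n. f $ n * x ^ n)" "summable (\<lambda>n. g $ n * x ^ n)"
    using assms(2-4) by (auto intro!: summable_fps)
qed

lemma P1_conv_radius_divide_one_minus_X:
  assumes "rat_series p q a" "P1 p q"
  shows "1 \<le> fps_conv_radius (Abs_fps a / (1 - fps_X))"
proof -
  have "1 \<le> norm z" if "0 < pole_order p (q * [:1, -1:]) z" for z
  proof (cases "z = 1")
    case False
    with that have "0 < pole_order p q z"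
      using pole_order_mult_one_minus_x rat_series_denom_nonzero[OF assms(1)] by simp
    then show ?thesis
      using P1_pole_norm_eq_1[OF assms(2)] by simp
  qed simp
  then show ?thesis
    using rat_series_conv_radius_ge_1[OF rat_series_divide_one_minus_X[OF assms(1)]]
    by (simp add: fps_nth_inverse)
qed

lemma P2_tendsto_at_1:
  assumes "rat_series p q a" "P2 d p q"
  shows "\<exists>L. ((\<lambda>x. poly p x / poly q x * (1 - x) ^ d) \<longlongrightarrow> L) (at 1)"
proof (cases "p = 0")
  case False
  have "q \<noteq> 0"
    using assms(1) by (rule rat_series_denom_nonzero)
  with False assms(2) have "order 1 q - order 1 p = d"
    using pole_order_of_real[of p q 1] by (simp add: P2_def)
  with False \<open>q \<noteq> 0\<close> show ?thesis
    by (intro tendsto_poly_divide_mult_power) auto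
qed (auto intro: tendsto_const)

lemma rat_series_eventually_eq_eval_divide_one_minus_X:
  assumes "rat_series p q a" "P1 p q"
  shows "eventually (\<lambda>x. poly p x / poly q x * (1 - x) ^ d
                          = (1 - x) ^ (d + 1) * eval_fps (Abs_fps a / (1 - fps_X)) x) (at_left 1)"
proof -
  let ?C = "Abs_fps a / (1 - fps_X)"
  have C: "rat_series p (q * [:1, -1:]) (($) ?C)"
    using assms(1) by (rule rat_series_divide_one_minus_X)
  have "1 \<le> fps_conv_radius ?C"
    using assms by (rule P1_conv_radius_divide_one_minus_X)
  have "eventually (\<lambda>x. poly q x \<noteq> 0) (at_left 1)"
    using eventually_poly_nonzero_at[OF rat_series_denom_nonzero[OF assms(1)], of 1]
    by (simp add: eventually_at_split)
  moreover have "eventually (\<lambda>x. x \<in> {0<..<1::real}) (at_left 1)"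
    by (rule eventually_at_left_real) simp
  ultimately show ?thesis
  proof eventually_elim
    case (elim x)
    then have "ereal \<bar>x\<bar> < 1"
      by simp
    then have "ereal \<bar>x\<bar> < fps_conv_radius ?C"
      using \<open>1 \<le> fps_conv_radius ?C\<close> by (rule less_le_trans)
    with elim have eval: "eval_fps ?C x = poly p x / (poly q x * (1 - x))"
      using eval_fps_rat_series[OF C] by (simp add: fps_nth_inverse algebra_simps)
    from elim show ?case
      unfolding eval by (simp add: field_simps)
  qed
qed

theorem lemma4p4:
  fixes a b :: "nat \<Rightarrow> real" and pa qa pb qb :: "real poly" and d :: nat
  assumes "d > 0"
    and "rat_series pa qa a" and "P1 pa qa" and "P2 d pa qa" and "P3 (d + 1) pa qa"
    and "rat_series pb qb b" and "P1 pb qb" and "P2 d pb qb" and "P3 (d + 1) pb qb"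
    and "\<forall>n. fps_nth (Abs_fps a / (1 - fps_X)) n \<le> fps_nth (Abs_fps b / (1 - fps_X)) n"
  shows "\<exists>La Lb. ((\<lambda>x. poly pa x / poly qa x * (1 - x) ^ d) \<longlongrightarrow> La) (at (1::real))
              \<and> ((\<lambda>x. poly pb x / poly qb x * (1 - x) ^ d) \<longlongrightarrow> Lb) (at (1::real))
              \<and> La \<le> Lb"
proof -
  let ?fa = "\<lambda>x. poly pa x / poly qa x * (1 - x) ^ d"
    and ?fb = "\<lambda>x. poly pb x / poly qb x * (1 - x) ^ d"
  obtain La Lb where La: "(?fa \<longlongrightarrow> La) (at 1)" and Lb: "(?fb \<longlongrightarrow> Lb) (at 1)"
    using P2_tendsto_at_1[OF assms(2,4)] P2_tendsto_at_1[OF assms(6,8)] by blast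
  have "eventually (\<lambda>x. ?fa x \<le> ?fb x) (at_left 1)"
    using rat_series_eventually_eq_eval_divide_one_minus_X[OF assms(2,3), of d]
      rat_series_eventually_eq_eval_divide_one_minus_X[OF assms(6,7), of d]
      eventually_at_left_real[OF zero_less_one]
  proof eventually_elim
    case (elim x)
    then have "ereal x < 1"
      by simp
    have "ereal x < fps_conv_radius (Abs_fps a / (1 - fps_X))"
      using \<open>ereal x < 1\<close> P1_conv_radius_divide_one_minus_X[OF assms(2,3)]
      by (rule less_le_trans)
    moreover have "ereal x < fps_conv_radius (Abs_fps b / (1 - fps_X))"
      using \<open>ereal x < 1\<close> P1_conv_radius_divide_one_minus_X[OF assms(6,7)]
      by (rule less_le_trans)
    ultimately have
      "eval_fps (Abs_fps a / (1 - fps_X)) x \<le> eval_fps (Abs_fps b / (1 - fps_X)) x"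
      using assms(10) elim by (intro eval_fps_mono) auto
    with elim show ?case
      by (simp add: mult_left_mono)
  qed
  moreover have "(?fa \<longlongrightarrow> La) (at_left 1)" "(?fb \<longlongrightarrow> Lb) (at_left 1)"
    using La Lb by (auto intro: filterlim_mono at_le)
  ultimately have "La \<le> Lb"
    by (intro tendsto_le[OF trivial_limit_at_left_real])
  with La Lb show ?thesis
    by blast
qed

end
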